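(* Let $\Omega$ be a finite-dimensional real Euclidean space and $f_1,\dots,f_N \colon \Omega\to\mathbb{R}$ continuous convex functions such that $E = \frac1N\sum_{j=1}^N f_j$ is coercive, and suppose each $f_j$ is $\mu$-strongly convex for some $\mu>0$. Let $\theta^*$ be the minimizer of $E$. Run DualFL (described in the context) with hyperparameters $\rho = 0$ and $\nu\in(0,\mu]$, and suppose that for some $\gamma>0$ the local iterates satisfy, for all $1\le j\le N$ and $n\ge 0$, \[ \Gamma^{n,j}(\theta_j^{(n+1)}) \leq \frac{1}{N\nu(n+1)^{4+\gamma}}. \] Then the sequence $\{\theta^{(n)}\}$ generated by DualFL converges to $\theta^*$, and moreover $\|\theta^{(n)} - \theta^*\|^2 \lesssim \frac{1}{n^2}$ for $n\ge 0$ (for $n \geq 1$).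
   Context: $h$ is $\mu$-strongly convex if $h-\frac{\mu}{2}\|\cdot\|^2$ is convex; $h^*(p)=\sup_x\{\langle p,x\rangle - h(x)\}$ is the Legendre--Fenchel conjugate. $A\lesssim B$ means $A\le CB$ for a constant $C>0$ independent of the iteration counter $n$. DualFL with hyperparameters $\rho\ge 0$, $\nu>0$: set $\theta^{(0)}=\theta_j^{(0)}=0\in\Omega$ ($1\le j\le N$), $\zeta_j^{(0)}=\zeta_j^{(-1)}=0\in\Omega$, $t_0=1$. For $n=0,1,2,\dots$: each client $j$ computes (by some local iterative solver) an approximate minimizer $\theta_j^{(n+1)}\in\Omega$ of $E^{n,j}(\theta) = f_j(\theta) - \nu\langle\zeta_j^{(n)},\theta\rangle$; then $\theta^{(n+1)}=\frac1N\sum_{j=1}^N\theta_j^{(n+1)}$; then with $t_{n+1} = \frac{1-\rho t_n^2 + \sqrt{(1-\rho t_n^2)^2+4t_n^2}}{2}$, $\beta_n = \frac{t_n-1}{t_{n+1}}\cdot\frac{1-t_{n+1}\rho}{1-\rho}$, each client sets $\zeta_j^{(n+1)} = (1+\beta_n)(\zeta_j^{(n)}+\theta^{(n+1)}-\theta_j^{(n+1)}) - \beta_n(\zeta_j^{(n-1)}+\theta^{(n)}-\theta_j^{(n)})$. Primal-dual gap: with $g_j(\theta)=f_j(\theta)-\frac{\nu}{2}\|\theta\|^2$ and $E^{n,j}_{\mathrm d}(\xi) = g_j^*(\xi)+\frac{1}{2\nu}\|\xi-\nu\zeta_j^{(n)}\|^2$, define $\Gamma^{n,j}(\theta) = E^{n,j}(\theta)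 + E^{n,j}_{\mathrm d}(\nu(\zeta_j^{(n)}-\theta))$. *)

theory Defs
  imports "HOL-Analysis.Analysis"
begin

definition strongly_convex :: "real \<Rightarrow> ('a::real_inner \<Rightarrow> real) \<Rightarrow> bool" where
  "strongly_convex \<mu> h \<longleftrightarrow> convex_on UNIV (\<lambda>x. h x - \<mu> / 2 * (norm x)\<^sup>2)"

definition fenchel_conj :: "('a::real_inner \<Rightarrow> real) \<Rightarrow> 'a \<Rightarrow> ereal" where
  "fenchel_conj h p = (SUP x. ereal (inner p x - h x))"

primrec dualfl_t :: "real \<Rightarrow> nat \<Rightarrow> real" where
  "dualfl_t \<rho> 0 = 1"
| "dualfl_t \<rho> (Suc n) =
     (1 - \<rho> * (dualfl_t \<rho> n)\<^sup>2 + sqrt ((1 - \<rho> * (dualfl_t \<rho> n)\<^sup>2)\<^sup>2 + 4 * (dualfl_t \<rho> n)\<^sup>2)) / 2"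

definition dualfl_beta :: "real \<Rightarrow> nat \<Rightarrow> real" where
  "dualfl_beta \<rho> n = (dualfl_t \<rho> n - 1) / dualfl_t \<rho> (Suc n)
      * ((1 - dualfl_t \<rho> (Suc n) * \<rho>) / (1 - \<rho>))"

definition local_energy :: "('a::real_inner \<Rightarrow> real) \<Rightarrow> real \<Rightarrow> 'a \<Rightarrow> 'a \<Rightarrow> real" where
  "local_energy fj \<nu> z \<theta> = fj \<theta> - \<nu> * inner z \<theta>"

definition dual_energy :: "('a::real_inner \<Rightarrow> real) \<Rightarrow> real \<Rightarrow> 'a \<Rightarrow> 'a \<Rightarrow> ereal" where
  "dual_energy fj \<nu> z \<xi> =
     fenchel_conj (\<lambda>x. fj x - \<nu> / 2 * (norm x)\<^sup>2) \<xi>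
     + ereal (1 / (2 * \<nu>) * (norm (\<xi> - \<nu> *\<^sub>R z))\<^sup>2)"

definition pd_gap :: "('a::real_inner \<Rightarrow> real) \<Rightarrow> real \<Rightarrow> 'a \<Rightarrow> 'a \<Rightarrow> ereal" where
  "pd_gap fj \<nu> z \<theta> = ereal (local_energy fj \<nu> z \<theta>) + dual_energy fj \<nu> z (\<nu> *\<^sub>R (z - \<theta>))"

end

theory Submission
  imports Defs
begin

text \<open>For \<rho> = 0, DualFL is an inexact FISTA method for the dual problem
  minimise  \<Sum>_j g_j^*(\<xi>_j) + |\<Sum>_j \<xi>_j|^2 / (2N\<nu>),   g_j = f_j - \<nu>/2 |.|^2,
where \<nu> \<le> \<mu> makes every g_j convex. The dual iterates are
\<xi>_j^(n) = \<nu>(\<zeta>_j^(n-1) - \<theta>_j^(n)); up to the factor \<nu>, \<zeta>^(n) is the FISTA extrapolation of these iterates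
minus its mean, \<theta>_j^(n+1) is the matching proximal step, and the bound on the local primal-dual
gap says that \<langle>\<xi>_j, \<theta>_j\<rangle> - g_j(\<theta>_j) approximates g_j^*(\<xi>_j) up to the tolerance.

A dual solution \<xi>^* is obtained by splitting 0 \<in> \<partial>(\<Sum>_j f_j)(\<theta>^*) into subgradients of the f_j
(a separating hyperplane argument) and shifting them by \<nu>\<theta>^*. Against it, the FISTA Lyapunov
function t_n^2 (dual gap) + 1/(2\<nu>) \<Sum>_j |t_n \<xi>_j^(n+1) - (t_n - 1) \<xi>_j^(n) - \<xi>_j^*|^2 grows by at most
N t_n^2 \<epsilon>_n per step, which is summable since t_n \<le> n + 1 and \<epsilon>_n = O(n^(-4-\<gamma>)). As t_n \<ge> (n + 2)/2,
the dual gap is O(1/n^2), and it dominates (N\<nu>/2)|\<theta>^(n+1) - \<theta>^*|^2 because \<theta>^(n) = -\<Sum>_j \<xi>_j^(n)/(N\<nu>).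

Continuity and coercivity of the f_j only serve to guarantee that \<theta>^* exists.\<close>

section \<open>Subgradients and the dual solution\<close>

definition is_subgradient :: "('a::real_inner \<Rightarrow> real) \<Rightarrow> 'a \<Rightarrow> 'a \<Rightarrow> bool" where
  "is_subgradient F x s \<longleftrightarrow> (\<forall>y. F x + inner s (y - x) \<le> F y)"

lemma convex_strict_sublevel:
  assumes "convex_on UNIV h"
  shows "convex {z. h z < (c::real)}"
proof (rule convexI, safe)
  fix z w and u v :: real
  assume "h z < c" "h w < c" "0 \<le> u" "0 \<le> v" "u + v = 1"
  then have "u * h z + v * h w < u * c + v * c"
    by (smt (verit, best) mult_left_mono mult_strict_left_mono)
  moreover have "h (u *\<^sub>R z + v *\<^sub>R w) \<le> u * h z + v * h w"
    using assms \<open>0 \<le> u\<close> \<open>0 \<le> v\<close> \<open>u + v = 1\<close> by (simp add: convex_on_def)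
  ultimately show "h (u *\<^sub>R z + v *\<^sub>R w) < c"
    using \<open>u + v = 1\<close> by (simp flip: distrib_right)
qed

lemma separating_hyperplane_epigraph_hypograph:
  fixes F G :: "'a::euclidean_space \<Rightarrow> real"
  assumes F: "convex_on UNIV F" and G: "concave_on UNIV G" and GF: "\<And>y. G y \<le> F y"
  obtains p \<alpha> c where "(p, \<alpha>) \<noteq> 0"
    and "\<And>y r. F y \<le> r \<Longrightarrow> inner p y + \<alpha> * r \<le> c"
    and "\<And>y r. r < G y \<Longrightarrow> c \<le> inner p y + \<alpha> * r"
proof -
  define A where "A = epigraph UNIV F"
  define B where "B = {z. snd z - G (fst z) < 0}"
  have "convex A"
    using F by (simp add: A_def convex_epigraph)
  moreover have "convex B"
    unfolding B_def
  proof (rule convex_strict_sublevel)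
    show "convex_on UNIV (\<lambda>z::'a \<times> real. snd z - G (fst z))"
      using G by (auto simp: convex_on_def concave_on_def algebra_simps)
  qed
  moreover have "(0, F 0) \<in> A" "(0, G 0 - 1) \<in> B"
    by (simp_all add: A_def B_def mem_epigraph)
  moreover have "A \<inter> B = {}"
    using GF by (auto simp: A_def B_def epigraph_def) (meson le_less_trans not_le)
  ultimately obtain w c where "w \<noteq> 0" and wA: "\<forall>z\<in>A. inner w z \<le> c" and wB: "\<forall>z\<in>B. c \<le> inner w z"
    using separating_hyperplane_sets by (metis empty_iff)
  obtain p \<alpha> where w: "w = (p, \<alpha>)" by fastforce
  show thesis
  proof
    show "(p, \<alpha>) \<noteq> 0"
      using \<open>w \<noteq> 0\<close> w by simp
    show "inner p y + \<alpha> * r \<le> c" if "F y \<le> r" for y r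
      using bspec[OF wA, of "(y, r)"] that by (simp add: A_def w mem_epigraph)
    show "c \<le> inner p y + \<alpha> * r" if "r < G y" for y r
      using wB that by (auto simp: B_def w)
  qed
qed

lemma convex_concave_sandwich:
  fixes F G :: "'a::euclidean_space \<Rightarrow> real"
  assumes F: "convex_on UNIV F" and G: "concave_on UNIV G" and GF: "\<And>y. G y \<le> F y"
  shows "\<exists>q c. \<forall>y. G y \<le> inner q y + c \<and> inner q y + c \<le> F y"
proof -
  obtain p \<alpha> c where "(p, \<alpha>) \<noteq> 0"
    and upper: "\<And>y r. F y \<le> r \<Longrightarrow> inner p y + \<alpha> * r \<le> c"
    and lower: "\<And>y r. r < G y \<Longrightarrow> c \<le> inner p y + \<alpha> * r"
    using separating_hyperplane_epigraph_hypograph[OF F G GF] by blast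
  have "\<alpha> < 0" \<comment> \<open>the hyperplane is not vertical since F and G are finite everywhere\<close>
  proof (rule ccontr)
    assume "\<not> \<alpha> < 0"
    show False
    proof (cases "\<alpha> = 0")
      case True
      have "inner p y = c" for y
        using upper[of y "F y"] lower[of "G y - 1" y] True by simp
      then have "p = 0"
        by (metis inner_zero_right inner_eq_zero_iff)
      with True \<open>(p, \<alpha>) \<noteq> 0\<close> show False by (simp add: zero_prod_def)
    next
      case False
      with \<open>\<not> \<alpha> < 0\<close> have "\<alpha> > 0" by simp
      define r where "r = max (F 0) ((\<bar>c\<bar> + 1) / \<alpha>)"
      have "\<bar>c\<bar> + 1 = \<alpha> * ((\<bar>c\<bar> + 1) / \<alpha>)"
        using \<open>\<alpha> > 0\<close> by simp
      also have "\<dots> \<le> \<alpha> * r"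
        using \<open>\<alpha> > 0\<close> by (intro mult_left_mono) (auto simp: r_def)
      finally show False
        using upper[of 0 r] by (simp add: r_def)
    qed
  qed
  define k where "k = - \<alpha>"
  have "k > 0" using \<open>\<alpha> < 0\<close> by (simp add: k_def)
  have "G y \<le> (inner p y - c) / k \<and> (inner p y - c) / k \<le> F y" for y
  proof
    have "r \<le> (inner p y - c) / k" if "r < G y" for r
      using lower[OF that] \<open>k > 0\<close> by (simp add: k_def field_simps)
    then show "G y \<le> (inner p y - c) / k"
      by (rule dense_le)
    show "(inner p y - c) / k \<le> F y"
      using upper[of y "F y"] \<open>k > 0\<close> by (simp add: k_def field_simps)
  qed
  then have "\<forall>y. G y \<le> inner ((1 / k) *\<^sub>R p) y + (- c / k) \<and> inner ((1 / k) *\<^sub>R p) y + (- c / k) \<le> F y"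
    by (simp add: diff_divide_distrib)
  then show ?thesis by blast
qed

lemma is_subgradient_add_split:
  fixes f g :: "'a::euclidean_space \<Rightarrow> real"
  assumes f: "convex_on UNIV f" and g: "convex_on UNIV g"
    and s: "is_subgradient (\<lambda>y. f y + g y) x s"
  shows "\<exists>a b. is_subgradient f x a \<and> is_subgradient g x b \<and> a + b = s"
proof -
  have F: "convex_on UNIV (\<lambda>y. f y - (f x + inner s (y - x)))"
  proof (rule convex_onI)
    fix t :: real and y z :: 'a
    assume "0 < t" "t < 1"
    then show "f ((1 - t) *\<^sub>R y + t *\<^sub>R z) - (f x + inner s ((1 - t) *\<^sub>R y + t *\<^sub>R z - x))
        \<le> (1 - t) * (f y - (f x + inner s (y - x))) + t * (f z - (f x + inner s (z - x)))"
      using convex_onD[OF f, of t y z] by (simp add: inner_add_right inner_diff_right algebra_simps)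
  qed simp
  have G: "concave_on UNIV (\<lambda>y. g x - g y)"
    by (rule concave_on_diff) (simp_all add: concave_on_const g)
  have "g x - g y \<le> f y - (f x + inner s (y - x))" for y
    using s by (simp add: is_subgradient_def algebra_simps)
  then obtain q c where qc: "\<And>y. g x - g y \<le> inner q y + c \<and> inner q y + c \<le> f y - (f x + inner s (y - x))"
    using convex_concave_sandwich[OF F G] by blast
  have "c = - inner q x"
    using qc[of x] by simp
  then have "is_subgradient f x (s + q)" "is_subgradient g x (- q)"
    using qc by (auto simp: is_subgradient_def inner_add_left inner_diff_right algebra_simps)
  then show ?thesis
    by (intro exI conjI) auto
qed

lemma convex_on_sum_functions:
  fixes F :: "'i \<Rightarrow> 'a::real_vector \<Rightarrow> real"
  assumes "finite I" "\<And>i. i \<in> I \<Longrightarrow> convex_on UNIV (F i)"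
  shows "convex_on UNIV (\<lambda>y. \<Sum>i\<in>I. F i y)"
  using assms by (induction I rule: finite_induct) (auto simp: convex_on_const)

lemma is_subgradient_sum_split:
  fixes F :: "'i \<Rightarrow> 'a::euclidean_space \<Rightarrow> real"
  assumes "finite I" "\<And>i. i \<in> I \<Longrightarrow> convex_on UNIV (F i)"
    and "is_subgradient (\<lambda>y. \<Sum>i\<in>I. F i y) x s"
  shows "\<exists>\<sigma>. (\<forall>i\<in>I. is_subgradient (F i) x (\<sigma> i)) \<and> (\<Sum>i\<in>I. \<sigma> i) = s"
  using assms
proof (induction I arbitrary: s rule: finite_induct)
  case empty
  then have "\<forall>y. inner s (y - x) \<le> 0"
    by (simp add: is_subgradient_def)
  from this[rule_format, of "x + s"] have "s = 0"
    by (metis add_diff_cancel_left' inner_eq_zero_iff inner_ge_zero order_antisym)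
  then show ?case by simp
next
  case (insert i I)
  have "convex_on UNIV (\<lambda>y. \<Sum>i\<in>I. F i y)"
    using insert by (intro convex_on_sum_functions) auto
  moreover have "is_subgradient (\<lambda>y. F i y + (\<Sum>i\<in>I. F i y)) x s"
    using insert by simp
  ultimately obtain a b where a: "is_subgradient (F i) x a" and b: "is_subgradient (\<lambda>y. \<Sum>i\<in>I. F i y) x b"
    and "a + b = s"
    using is_subgradient_add_split[of "F i"] insert.prems(1) by blast
  obtain \<sigma> where "\<forall>i\<in>I. is_subgradient (F i) x (\<sigma> i)" "(\<Sum>i\<in>I. \<sigma> i) = b"
    using insert.IH[OF _ b] insert.prems(1) by blast
  with a \<open>a + b = s\<close> insert.hyps show ?case
    by (intro exI[of _ "\<sigma>(i := a)"]) (auto intro!: sum.cong)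
qed

lemma is_subgradient_remove_quadratic:
  assumes g: "convex_on UNIV g" and s: "is_subgradient (\<lambda>y. g y + \<nu> / 2 * (norm y)\<^sup>2) x s"
  shows "is_subgradient g x (s - \<nu> *\<^sub>R x)"
  unfolding is_subgradient_def
proof
  fix y
  define d where "d = y - x"
  \<comment> \<open>compare along the segment x + t d and let t tend to 0\<close>
  have "g x + inner (s - \<nu> *\<^sub>R x) d \<le> g y + t * (\<nu> / 2 * (norm d)\<^sup>2)" if "0 < t" "t < 1" for t
  proof -
    have "g (x + t *\<^sub>R d) \<le> g x - t * g x + t * g y"
      using convex_onD[OF g, of t x y] that by (simp add: d_def algebra_simps)
    moreover have "g x + \<nu> / 2 * (norm x)\<^sup>2 + t * inner s d \<le> g (x + t *\<^sub>R d) + \<nu> / 2 * (norm (x + t *\<^sub>R d))\<^sup>2"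
      using s unfolding is_subgradient_def by (metis add_diff_cancel_left' inner_scaleR_right)
    moreover have "\<nu> / 2 * (norm (x + t *\<^sub>R d))\<^sup>2 = \<nu> / 2 * (norm x)\<^sup>2 + t * (\<nu> * inner x d) + t * (t * (\<nu> / 2 * (norm d)\<^sup>2))"
      unfolding power2_norm_eq_inner by (simp add: inner_add_left inner_add_right inner_commute algebra_simps)
    ultimately have "t * g x + t * inner s d - t * (\<nu> * inner x d) \<le> t * g y + t * (t * (\<nu> / 2 * (norm d)\<^sup>2))"
      by linarith
    then have "t * (g x + inner (s - \<nu> *\<^sub>R x) d) \<le> t * (g y + t * (\<nu> / 2 * (norm d)\<^sup>2))"
      by (simp add: inner_diff_left algebra_simps)
    then show ?thesis
      using \<open>0 < t\<close> by simp
  qed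
  then have "\<forall>\<^sub>F t in at_right 0. g x + inner (s - \<nu> *\<^sub>R x) d \<le> g y + t * (\<nu> / 2 * (norm d)\<^sup>2)"
    using eventually_at_right_real[of 0 1] by (auto elim: eventually_mono)
  moreover have "((\<lambda>t. g y + t * (\<nu> / 2 * (norm d)\<^sup>2)) \<longlongrightarrow> g y + 0 * (\<nu> / 2 * (norm d)\<^sup>2)) (at_right 0)"
    by (intro tendsto_intros)
  ultimately have "g x + inner (s - \<nu> *\<^sub>R x) d \<le> g y"
    using tendsto_lowerbound by fastforce
  then show "g x + inner (s - \<nu> *\<^sub>R x) (y - x) \<le> g y"
    by (simp add: d_def)
qed

lemma convex_on_norm_square:
  assumes "c \<ge> 0"
  shows "convex_on UNIV (\<lambda>x::'a::real_inner. c * (norm x)\<^sup>2)"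
proof (rule convex_onI)
  fix t :: real and x y :: 'a
  assume "0 < t" "t < 1"
  have "(1 - t) * (norm x)\<^sup>2 + t * (norm y)\<^sup>2 - (norm ((1 - t) *\<^sub>R x + t *\<^sub>R y))\<^sup>2
      = t * (1 - t) * (norm (x - y))\<^sup>2"
    unfolding power2_norm_eq_inner
    by (simp add: inner_add_left inner_add_right inner_diff_left inner_diff_right inner_commute algebra_simps)
  moreover have "0 \<le> t * (1 - t) * (norm (x - y))\<^sup>2"
    using \<open>0 < t\<close> \<open>t < 1\<close> by simp
  ultimately have "(norm ((1 - t) *\<^sub>R x + t *\<^sub>R y))\<^sup>2 \<le> (1 - t) * (norm x)\<^sup>2 + t * (norm y)\<^sup>2"
    by linarith
  then have "c * (norm ((1 - t) *\<^sub>R x + t *\<^sub>R y))\<^sup>2 \<le> c * ((1 - t) * (norm x)\<^sup>2 + t * (norm y)\<^sup>2)"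
    using assms by (rule mult_left_mono)
  then show "c * (norm ((1 - t) *\<^sub>R x + t *\<^sub>R y))\<^sup>2 \<le> (1 - t) * (c * (norm x)\<^sup>2) + t * (c * (norm y)\<^sup>2)"
    by (simp add: algebra_simps)
qed simp

lemma strongly_convex_mono:
  assumes "strongly_convex \<mu> h" "\<nu> \<le> \<mu>"
  shows "strongly_convex \<nu> h"
proof -
  have "convex_on UNIV (\<lambda>x. (h x - \<mu> / 2 * (norm x)\<^sup>2) + (\<mu> - \<nu>) / 2 * (norm x)\<^sup>2)"
    using assms by (intro convex_on_add convex_on_norm_square) (auto simp: strongly_convex_def)
  then show ?thesis
    by (simp add: strongly_convex_def algebra_simps diff_divide_distrib)
qed

lemma exists_dual_solution:
  fixes f :: "'i \<Rightarrow> 'a::euclidean_space \<Rightarrow> real"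
  assumes "finite I"
    and convex: "\<And>i. i \<in> I \<Longrightarrow> convex_on UNIV (f i)"
    and strong: "\<And>i. i \<in> I \<Longrightarrow> strongly_convex \<nu> (f i)"
    and min: "\<And>y. (\<Sum>i\<in>I. f i x) \<le> (\<Sum>i\<in>I. f i y)"
  shows "\<exists>\<xi>. (\<forall>i\<in>I. is_subgradient (\<lambda>y. f i y - \<nu> / 2 * (norm y)\<^sup>2) x (\<xi> i))
           \<and> (\<Sum>i\<in>I. \<xi> i) = - (real (card I) * \<nu>) *\<^sub>R x"
proof -
  have "is_subgradient (\<lambda>y. \<Sum>i\<in>I. f i y) x 0"
    using min by (simp add: is_subgradient_def)
  then obtain \<sigma> where \<sigma>: "\<forall>i\<in>I. is_subgradient (f i) x (\<sigma> i)" and "(\<Sum>i\<in>I. \<sigma> i) = 0"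
    using is_subgradient_sum_split[of I f x 0, OF \<open>finite I\<close> convex] by blast
  have "\<forall>i\<in>I. is_subgradient (\<lambda>y. f i y - \<nu> / 2 * (norm y)\<^sup>2) x (\<sigma> i - \<nu> *\<^sub>R x)"
  proof
    fix i
    assume "i \<in> I"
    then have "is_subgradient (\<lambda>y. (f i y - \<nu> / 2 * (norm y)\<^sup>2) + \<nu> / 2 * (norm y)\<^sup>2) x (\<sigma> i)"
      using \<sigma> by simp
    with strong[OF \<open>i \<in> I\<close>] show "is_subgradient (\<lambda>y. f i y - \<nu> / 2 * (norm y)\<^sup>2) x (\<sigma> i - \<nu> *\<^sub>R x)"
      unfolding strongly_convex_def by (rule is_subgradient_remove_quadratic)
  qed
  moreover have "(\<Sum>i\<in>I. \<sigma> i - \<nu> *\<^sub>R x) = - (real (card I) * \<nu>) *\<^sub>R x"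
    using \<open>(\<Sum>i\<in>I. \<sigma> i) = 0\<close> by (simp add: sum_subtractf sum_constant_scaleR)
  ultimately show ?thesis
    by (intro exI[of _ "\<lambda>i. \<sigma> i - \<nu> *\<^sub>R x"] conjI)
qed

section \<open>The momentum sequence for \<rho> = 0\<close>

lemma dualfl_t_zero_Suc_square: "(dualfl_t 0 (Suc n))\<^sup>2 - dualfl_t 0 (Suc n) = (dualfl_t 0 n)\<^sup>2"
proof -
  define q where "q = sqrt (1 + 4 * (dualfl_t 0 n)\<^sup>2)"
  have "(dualfl_t 0 (Suc n))\<^sup>2 - dualfl_t 0 (Suc n) = ((1 + q) / 2)\<^sup>2 - (1 + q) / 2"
    by (simp add: q_def)
  also have "\<dots> = (q\<^sup>2 - 1) / 4"
    by (simp add: power2_eq_square field_simps)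
  also have "\<dots> = (dualfl_t 0 n)\<^sup>2"
    by (simp add: q_def)
  finally show ?thesis .
qed

lemma dualfl_t_zero_ge: "(real n + 2) / 2 \<le> dualfl_t 0 n"
proof (induction n)
  case (Suc n)
  have "2 * dualfl_t 0 n \<le> sqrt (1 + 4 * (dualfl_t 0 n)\<^sup>2)"
    by (rule real_le_rsqrt) (simp add: power2_eq_square)
  with Suc show ?case by simp
qed simp

lemma dualfl_t_zero_ge_one: "1 \<le> dualfl_t 0 n"
  using dualfl_t_zero_ge[of n] by simp

lemma dualfl_t_zero_le: "dualfl_t 0 n \<le> real n + 1"
proof (induction n)
  case (Suc n)
  have "sqrt (1 + 4 * (dualfl_t 0 n)\<^sup>2) \<le> sqrt ((1 + 2 * dualfl_t 0 n)\<^sup>2)"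
    using dualfl_t_zero_ge_one[of n] by (intro real_sqrt_le_mono) (simp add: power2_eq_square algebra_simps)
  with Suc dualfl_t_zero_ge_one[of n] show ?case by simp
qed simp

lemma div_dualfl_t_zero_square_le:
  assumes "0 \<le> K"
  shows "K / (dualfl_t 0 n)\<^sup>2 \<le> 4 * K / (real n + 1)\<^sup>2"
proof -
  have "((real n + 1) / 2)\<^sup>2 \<le> (dualfl_t 0 n)\<^sup>2"
    using dualfl_t_zero_ge[of n] by (intro power_mono) auto
  then have "K / (dualfl_t 0 n)\<^sup>2 \<le> K / ((real n + 1) / 2)\<^sup>2"
    using assms dualfl_t_zero_ge_one[of n] by (intro divide_left_mono) auto
  then show ?thesis
    by (simp add: power_divide mult.commute)
qed

lemma dualfl_beta_zero: "dualfl_beta 0 n = (dualfl_t 0 n - 1) / dualfl_t 0 (Suc n)"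
  by (simp add: dualfl_beta_def)

section \<open>Inexact FISTA estimates for the dual problem\<close>

lemma norm_sum_square_le:
  fixes v :: "nat \<Rightarrow> 'a::real_normed_vector"
  shows "(norm (\<Sum>j=1..N. v j))\<^sup>2 \<le> real N * (\<Sum>j=1..N. (norm (v j))\<^sup>2)"
proof -
  have "(norm (\<Sum>j=1..N. v j))\<^sup>2 \<le> (\<Sum>j=1..N. norm (v j))\<^sup>2"
    by (intro power_mono norm_sum) auto
  also have "\<dots> \<le> (\<Sum>j=1..N. (norm (v j))\<^sup>2) * card {1..N}"
    by (rule sum_squared_le_sum_of_squares)
  finally show ?thesis by (simp add: mult.commute)
qed

lemma fista_norm_square_identity:
  fixes a b c e z :: "'a::real_inner"
  assumes t_sq: "t * t - t = \<tau> * \<tau>" and t0: "t \<noteq> 0"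
    and e: "e = b + ((\<tau> - 1) / t) *\<^sub>R (b - a)"
  shows "\<tau>\<^sup>2 * (2 * inner (c - b) (e - c)) + t * (2 * inner (c - z) (e - c)) + t\<^sup>2 * (norm (c - e))\<^sup>2
    = (norm (\<tau> *\<^sub>R b - (\<tau> - 1) *\<^sub>R a - z))\<^sup>2 - (norm (t *\<^sub>R c - (t - 1) *\<^sub>R b - z))\<^sup>2"
proof -
  define X where "X = t *\<^sub>R c - (t - 1) *\<^sub>R b - z"
  define Y where "Y = t *\<^sub>R (e - c)"
  have te: "t *\<^sub>R e = t *\<^sub>R b + (\<tau> - 1) *\<^sub>R (b - a)"
    using t0 by (simp add: e scaleR_add_right)
  have XY: "X + Y = \<tau> *\<^sub>R b - (\<tau> - 1) *\<^sub>R a - z"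
  proof -
    have "X + Y = t *\<^sub>R e - (t - 1) *\<^sub>R b - z"
      by (simp add: X_def Y_def algebra_simps)
    also have "\<dots> = \<tau> *\<^sub>R b - (\<tau> - 1) *\<^sub>R a - z"
      by (simp add: te algebra_simps)
    finally show ?thesis .
  qed
  have Xd: "X = (t - 1) *\<^sub>R (c - b) + (c - z)"
    by (simp add: X_def algebra_simps)
  have "(norm (X + Y))\<^sup>2 - (norm X)\<^sup>2 = 2 * inner X Y + (norm Y)\<^sup>2"
    unfolding power2_norm_eq_inner by (simp add: inner_add_left inner_add_right inner_commute)
  also have "inner X Y = t * (t - 1) * inner (c - b) (e - c) + t * inner (c - z) (e - c)"
    by (simp add: Xd Y_def inner_add_left algebra_simps)
  also have "(norm Y)\<^sup>2 = t\<^sup>2 * (norm (c - e))\<^sup>2"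
    by (simp add: Y_def power_mult_distrib norm_minus_commute)
  also have "t * (t - 1) = \<tau>\<^sup>2" using t_sq by (simp add: power2_eq_square algebra_simps)
  finally have "(norm (X + Y))\<^sup>2 - (norm X)\<^sup>2 = \<tau>\<^sup>2 * (2 * inner (c - b) (e - c)) + t * (2 * inner (c - z) (e - c)) + t\<^sup>2 * (norm (c - e))\<^sup>2"
    by (simp add: algebra_simps)
  then show ?thesis unfolding XY[symmetric] X_def[symmetric] by simp
qed

text \<open>One proximal gradient step \<eta> \<mapsto> \<xi> on the dual energy (smooth part with constant 1/\<nu>),
  \<theta> being the primal points it produces, compared with any \<omega> whose conjugate values are
  bounded by c.\<close>

lemma prox_step_inequality:
  fixes g :: "nat \<Rightarrow> 'a::real_inner \<Rightarrow> real" and \<xi> \<omega> \<eta> \<theta> :: "nat \<Rightarrow> 'a" and c :: "nat \<Rightarrow> real"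
  assumes "\<nu> > 0" "N \<ge> 1"
    and primal: "\<And>j. j \<in> {1..N} \<Longrightarrow> \<theta> j = (1 / \<nu>) *\<^sub>R (\<eta> j - \<xi> j - (1 / real N) *\<^sub>R (\<Sum>k=1..N. \<eta> k))"
    and conj: "\<And>j y. j \<in> {1..N} \<Longrightarrow> inner (\<omega> j) y - g j y \<le> c j"
  shows "(\<Sum>j=1..N. inner (\<xi> j) (\<theta> j) - g j (\<theta> j)) + (norm (\<Sum>j=1..N. \<xi> j))\<^sup>2 / (2 * N * \<nu>)
    \<le> (\<Sum>j=1..N. c j) + (norm (\<Sum>j=1..N. \<omega> j))\<^sup>2 / (2 * N * \<nu>)
       + 1 / \<nu> * (\<Sum>j=1..N. inner (\<xi> j - \<omega> j) (\<eta> j - \<xi> j))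
       + 1 / (2 * \<nu>) * (\<Sum>j=1..N. (norm (\<xi> j - \<eta> j))\<^sup>2)"
proof -
  define X W H where "X = (\<Sum>j=1..N. \<xi> j)" and "W = (\<Sum>j=1..N. \<omega> j)" and "H = (\<Sum>j=1..N. \<eta> j)"
  have "inner (\<xi> j) (\<theta> j) - g j (\<theta> j) \<le> c j + inner (\<xi> j - \<omega> j) (\<theta> j)" if "j \<in> {1..N}" for j
    using conj[OF that, of "\<theta> j"] by (simp add: inner_diff_left)
  then have "(\<Sum>j=1..N. inner (\<xi> j) (\<theta> j) - g j (\<theta> j)) \<le> (\<Sum>j=1..N. c j + inner (\<xi> j - \<omega> j) (\<theta> j))"
    by (rule sum_mono)
  also have "\<dots> = (\<Sum>j=1..N. c j) + 1 / \<nu> * (\<Sum>j=1..N. inner (\<xi> j - \<omega> j) (\<eta> j - \<xi> j))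
      - inner (X - W) H / (N * \<nu>)"
  proof -
    have "inner (\<xi> j - \<omega> j) (\<theta> j) = 1 / \<nu> * inner (\<xi> j - \<omega> j) (\<eta> j - \<xi> j) - inner (\<xi> j - \<omega> j) H / (N * \<nu>)"
      if "j \<in> {1..N}" for j
      using primal[OF that] by (simp add: H_def inner_diff_right diff_divide_distrib)
    then have "(\<Sum>j=1..N. inner (\<xi> j - \<omega> j) (\<theta> j))
        = (\<Sum>j=1..N. 1 / \<nu> * inner (\<xi> j - \<omega> j) (\<eta> j - \<xi> j) - inner (\<xi> j - \<omega> j) H / (N * \<nu>))"
      by (rule sum.cong[OF refl])
    then show ?thesis
      by (simp add: X_def W_def sum.distrib sum_subtractf sum_distrib_left inner_sum_left inner_diff_left
          flip: sum_divide_distrib)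
  qed
  finally have conj_part: "(\<Sum>j=1..N. inner (\<xi> j) (\<theta> j) - g j (\<theta> j))
      \<le> (\<Sum>j=1..N. c j) + 1 / \<nu> * (\<Sum>j=1..N. inner (\<xi> j - \<omega> j) (\<eta> j - \<xi> j)) - inner (X - W) H / (N * \<nu>)" .
  have "(norm X)\<^sup>2 - (norm W)\<^sup>2 - 2 * inner (X - W) H = (norm (X - H))\<^sup>2 - (norm (W - H))\<^sup>2"
    unfolding power2_norm_eq_inner by (simp add: inner_diff_left inner_diff_right inner_commute)
  also have "\<dots> \<le> (norm (\<Sum>j=1..N. \<xi> j - \<eta> j))\<^sup>2"
    by (simp add: X_def H_def sum_subtractf)
  also have "\<dots> \<le> N * (\<Sum>j=1..N. (norm (\<xi> j - \<eta> j))\<^sup>2)"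
    by (rule norm_sum_square_le)
  finally have "((norm X)\<^sup>2 - (norm W)\<^sup>2 - 2 * inner (X - W) H) / (2 * N * \<nu>)
      \<le> N * (\<Sum>j=1..N. (norm (\<xi> j - \<eta> j))\<^sup>2) / (2 * N * \<nu>)"
    using \<open>\<nu> > 0\<close> by (intro divide_right_mono) auto
  then have "(norm X)\<^sup>2 / (2 * N * \<nu>) - (norm W)\<^sup>2 / (2 * N * \<nu>) - inner (X - W) H / (N * \<nu>)
      \<le> 1 / (2 * \<nu>) * (\<Sum>j=1..N. (norm (\<xi> j - \<eta> j))\<^sup>2)"
    using \<open>N \<ge> 1\<close> by (simp add: diff_divide_distrib)
  with conj_part show ?thesis
    by (simp add: X_def W_def)
qed

lemma fista_lyapunov_step:
  fixes \<xi>\<^sub>0 \<xi> \<xi>' \<omega> \<eta> :: "nat \<Rightarrow> 'a::real_inner"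
  assumes "\<nu> > 0" and "t \<ge> 1" and t_sq: "t\<^sup>2 - t = \<tau>\<^sup>2"
    and \<eta>: "\<And>j. j \<in> {1..N} \<Longrightarrow> \<eta> j = \<xi> j + ((\<tau> - 1) / t) *\<^sub>R (\<xi> j - \<xi>\<^sub>0 j)"
    and descent: "p' \<le> p + e + 1 / \<nu> * (\<Sum>j=1..N. inner (\<xi>' j - \<xi> j) (\<eta> j - \<xi>' j))
                  + 1 / (2 * \<nu>) * (\<Sum>j=1..N. (norm (\<xi>' j - \<eta> j))\<^sup>2)"
    and vs_opt: "p' \<le> \<phi> + 1 / \<nu> * (\<Sum>j=1..N. inner (\<xi>' j - \<omega> j) (\<eta> j - \<xi>' j))
                  + 1 / (2 * \<nu>) * (\<Sum>j=1..N. (norm (\<xi>' j - \<eta> j))\<^sup>2)"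
  shows "t\<^sup>2 * (p' - \<phi>) + 1 / (2 * \<nu>) * (\<Sum>j=1..N. (norm (t *\<^sub>R \<xi>' j - (t - 1) *\<^sub>R \<xi> j - \<omega> j))\<^sup>2)
    \<le> \<tau>\<^sup>2 * (p + e - \<phi>) + 1 / (2 * \<nu>) * (\<Sum>j=1..N. (norm (\<tau> *\<^sub>R \<xi> j - (\<tau> - 1) *\<^sub>R \<xi>\<^sub>0 j - \<omega> j))\<^sup>2)"
proof -
  define D\<^sub>\<xi> where "D\<^sub>\<xi> = (\<Sum>j=1..N. inner (\<xi>' j - \<xi> j) (\<eta> j - \<xi>' j))"
  define D\<^sub>\<omega> where "D\<^sub>\<omega> = (\<Sum>j=1..N. inner (\<xi>' j - \<omega> j) (\<eta> j - \<xi>' j))"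
  define R where "R = (\<Sum>j=1..N. (norm (\<xi>' j - \<eta> j))\<^sup>2)"
  define U where "U = (\<Sum>j=1..N. (norm (\<tau> *\<^sub>R \<xi> j - (\<tau> - 1) *\<^sub>R \<xi>\<^sub>0 j - \<omega> j))\<^sup>2)"
  define U' where "U' = (\<Sum>j=1..N. (norm (t *\<^sub>R \<xi>' j - (t - 1) *\<^sub>R \<xi> j - \<omega> j))\<^sup>2)"
  have "\<tau>\<^sup>2 * (2 * D\<^sub>\<xi>) + t * (2 * D\<^sub>\<omega>) + t\<^sup>2 * R
      = (\<Sum>j=1..N. \<tau>\<^sup>2 * (2 * inner (\<xi>' j - \<xi> j) (\<eta> j - \<xi>' j))
          + t * (2 * inner (\<xi>' j - \<omega> j) (\<eta> j - \<xi>' j)) + t\<^sup>2 * (norm (\<xi>' j - \<eta> j))\<^sup>2)"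
    by (simp add: D\<^sub>\<xi>_def D\<^sub>\<omega>_def R_def sum.distrib sum_distrib_left)
  also have "\<dots> = U - U'"
    unfolding U_def U'_def sum_subtractf[symmetric]
  proof (rule sum.cong[OF refl], rule fista_norm_square_identity)
    show "t * t - t = \<tau> * \<tau>"
      using t_sq by (simp add: power2_eq_square)
  qed (use \<open>t \<ge> 1\<close> \<eta> in auto)
  finally have norms: "\<tau>\<^sup>2 * (2 * D\<^sub>\<xi>) + t * (2 * D\<^sub>\<omega>) + t\<^sup>2 * R = U - U'" .
  have "\<tau>\<^sup>2 * p' \<le> \<tau>\<^sup>2 * (p + e + 1 / \<nu> * D\<^sub>\<xi> + 1 / (2 * \<nu>) * R)"
    using descent by (intro mult_left_mono) (auto simp: D\<^sub>\<xi>_def R_def)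
  moreover have "t * p' \<le> t * (\<phi> + 1 / \<nu> * D\<^sub>\<omega> + 1 / (2 * \<nu>) * R)"
    using vs_opt \<open>t \<ge> 1\<close> by (intro mult_left_mono) (auto simp: D\<^sub>\<omega>_def R_def)
  moreover have "t\<^sup>2 = \<tau>\<^sup>2 + t"
    using t_sq by simp
  ultimately have "t\<^sup>2 * p' \<le> \<tau>\<^sup>2 * (p + e) + t * \<phi> + 1 / (2 * \<nu>) * (\<tau>\<^sup>2 * (2 * D\<^sub>\<xi>) + t * (2 * D\<^sub>\<omega>) + t\<^sup>2 * R)"
    using \<open>\<nu> > 0\<close> by (simp add: field_simps)
  then have "t\<^sup>2 * p' + 1 / (2 * \<nu>) * U' \<le> \<tau>\<^sup>2 * p + \<tau>\<^sup>2 * e + t * \<phi> + 1 / (2 * \<nu>) * U"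
    unfolding norms right_diff_distrib distrib_left by linarith
  moreover have "t\<^sup>2 * \<phi> = \<tau>\<^sup>2 * \<phi> + t * \<phi>"
    using \<open>t\<^sup>2 = \<tau>\<^sup>2 + t\<close> by (simp add: distrib_right)
  ultimately show ?thesis
    unfolding U_def[symmetric] U'_def[symmetric] right_diff_distrib distrib_left by linarith
qed

section \<open>The DualFL iteration as a dual method\<close>

lemma pd_gap_le_imp_conj_approx:
  assumes "pd_gap f \<nu> z \<theta> \<le> ereal \<epsilon>"
  shows "inner (\<nu> *\<^sub>R (z - \<theta>)) y - (f y - \<nu> / 2 * (norm y)\<^sup>2)
           \<le> inner (\<nu> *\<^sub>R (z - \<theta>)) \<theta> - (f \<theta> - \<nu> / 2 * (norm \<theta>)\<^sup>2) + \<epsilon>"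
proof -
  define \<xi> where "\<xi> = \<nu> *\<^sub>R (z - \<theta>)"
  define W where "W = 1 / (2 * \<nu>) * (norm (\<xi> - \<nu> *\<^sub>R z))\<^sup>2"
  have "ereal (inner \<xi> y - (f y - \<nu> / 2 * (norm y)\<^sup>2))
      \<le> fenchel_conj (\<lambda>x. f x - \<nu> / 2 * (norm x)\<^sup>2) \<xi>"
    unfolding fenchel_conj_def by (rule SUP_upper) simp
  then have "ereal (local_energy f \<nu> z \<theta>) + (ereal (inner \<xi> y - (f y - \<nu> / 2 * (norm y)\<^sup>2)) + ereal W)
      \<le> pd_gap f \<nu> z \<theta>"
    unfolding pd_gap_def dual_energy_def \<xi>_def[symmetric] W_def by (intro add_left_mono add_right_mono)
  then have "ereal (local_energy f \<nu> z \<theta> + (inner \<xi> y - (f y - \<nu> / 2 * (norm y)\<^sup>2) + W)) \<le> ereal \<epsilon>"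
    using assms unfolding plus_ereal.simps by (rule order_trans)
  moreover have "W = \<nu> / 2 * (norm \<theta>)\<^sup>2"
  proof -
    have "(norm (\<xi> - \<nu> *\<^sub>R z))\<^sup>2 = \<nu>\<^sup>2 * (norm \<theta>)\<^sup>2"
      by (simp add: \<xi>_def algebra_simps power_mult_distrib)
    then show ?thesis
      by (simp add: W_def power2_eq_square)
  qed
  moreover have "inner \<xi> \<theta> - (f \<theta> - \<nu> / 2 * (norm \<theta>)\<^sup>2) = - local_energy f \<nu> z \<theta> - \<nu> / 2 * (norm \<theta>)\<^sup>2"
    unfolding \<xi>_def local_energy_def power2_norm_eq_inner
    by (simp add: inner_diff_left inner_diff_right inner_commute algebra_simps)
  ultimately show ?thesis
    unfolding \<xi>_def[symmetric] by simp
qed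

locale dualfl_iteration =
  fixes f :: "nat \<Rightarrow> 'a::real_inner \<Rightarrow> real" and N :: nat and \<nu> :: real
    and \<theta> :: "nat \<Rightarrow> 'a" and \<theta>l \<zeta> :: "nat \<Rightarrow> nat \<Rightarrow> 'a" and \<epsilon> :: "nat \<Rightarrow> real"
  assumes N: "N \<ge> 1" and nu: "\<nu> > 0"
    and init_l: "\<And>j. \<theta>l 0 j = 0" and init_z: "\<And>j. \<zeta> 0 j = 0"
    and avg: "\<And>n. \<theta> n = (1 / real N) *\<^sub>R (\<Sum>j=1..N. \<theta>l n j)"
    and upd: "\<And>n j. j \<in> {1..N} \<Longrightarrow>
       \<zeta> (Suc n) j = (1 + dualfl_beta 0 n) *\<^sub>R (\<zeta> n j + \<theta> (Suc n) - \<theta>l (Suc n) j)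
                     - dualfl_beta 0 n *\<^sub>R (\<zeta> (n - 1) j + \<theta> n - \<theta>l n j)"
    and inexact: "\<And>n j. j \<in> {1..N} \<Longrightarrow> pd_gap (f j) \<nu> (\<zeta> n j) (\<theta>l (Suc n) j) \<le> ereal (\<epsilon> n)"
begin

definition g :: "nat \<Rightarrow> 'a \<Rightarrow> real" where
  "g j = (\<lambda>x. f j x - \<nu> / 2 * (norm x)\<^sup>2)"

text \<open>\<xi> n j is the point \<nu>(\<zeta>_j^(n-1) - \<theta>_j^(n)) at which \<Gamma>^(n-1,j) evaluates the dual energy. For n = 0
  the truncated subtraction reads \<zeta> 0 for \<zeta>^(-1), which is also 0.\<close>

definition \<xi> :: "nat \<Rightarrow> nat \<Rightarrow> 'a" where
  "\<xi> n j = \<nu> *\<^sub>R (\<zeta> (n - 1) j - \<theta>l n j)"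

definition \<eta> :: "nat \<Rightarrow> nat \<Rightarrow> 'a" where
  "\<eta> n j = \<xi> n j + dualfl_beta 0 (n - 1) *\<^sub>R (\<xi> n j - \<xi> (n - 1) j)"

lemma xi_0 [simp]: "\<xi> 0 j = 0"
  by (simp add: \<xi>_def init_l init_z)

lemma eta_0 [simp]: "\<eta> 0 j = 0"
  by (simp add: \<eta>_def)

lemma sum_local_eq: "(\<Sum>j=1..N. \<theta>l n j) = real N *\<^sub>R \<theta> n"
proof -
  have "real N \<noteq> 0"
    using N by simp
  then show ?thesis
    by (simp add: avg)
qed

lemma sum_zeta: "(\<Sum>j=1..N. \<zeta> n j) = 0"
proof (induction n rule: less_induct)
  case (less n)
  have shift: "(\<Sum>j=1..N. \<zeta> k j + \<theta> m - \<theta>l m j) = (\<Sum>j=1..N. \<zeta> k j)" for k m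
    using sum_local_eq[of m] by (simp add: sum.distrib sum_subtractf sum_constant_scaleR)
  show ?case
  proof (cases n)
    case (Suc m)
    then have "(\<Sum>j=1..N. \<zeta> n j)
        = (\<Sum>j=1..N. (1 + dualfl_beta 0 m) *\<^sub>R (\<zeta> m j + \<theta> (Suc m) - \<theta>l (Suc m) j)
                      - dualfl_beta 0 m *\<^sub>R (\<zeta> (m - 1) j + \<theta> m - \<theta>l m j))"
      by (intro sum.cong) (simp_all add: upd)
    also have "\<dots> = (1 + dualfl_beta 0 m) *\<^sub>R (\<Sum>j=1..N. \<zeta> m j + \<theta> (Suc m) - \<theta>l (Suc m) j)
          - dualfl_beta 0 m *\<^sub>R (\<Sum>j=1..N. \<zeta> (m - 1) j + \<theta> m - \<theta>l m j)"
      by (simp add: sum_subtractf scaleR_sum_right[symmetric])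
    also have "\<dots> = 0"
      unfolding shift using less Suc by simp
    finally show ?thesis .
  qed (simp add: init_z)
qed

lemma theta_eq_sum_xi: "\<theta> n = - (1 / (real N * \<nu>)) *\<^sub>R (\<Sum>j=1..N. \<xi> n j)"
proof -
  have "(\<Sum>j=1..N. \<xi> n j) = - \<nu> *\<^sub>R (\<Sum>j=1..N. \<theta>l n j)"
    using sum_zeta[of "n - 1"] by (simp add: \<xi>_def sum_subtractf scaleR_sum_right[symmetric])
  then show ?thesis
    using N nu sum_local_eq[of n] by simp
qed

lemma local_residual_eq: "\<zeta> (n - 1) j + \<theta> n - \<theta>l n j = (1 / \<nu>) *\<^sub>R (\<xi> n j - (1 / real N) *\<^sub>R (\<Sum>k=1..N. \<xi> n k))"
  using nu by (simp add: theta_eq_sum_xi \<xi>_def algebra_simps)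

lemma zeta_eq_centered_eta:
  assumes "j \<in> {1..N}"
  shows "\<nu> *\<^sub>R \<zeta> n j = \<eta> n j - (1 / real N) *\<^sub>R (\<Sum>k=1..N. \<eta> n k)"
proof (cases n)
  case (Suc m)
  define \<beta> where "\<beta> = dualfl_beta 0 m"
  define X where "X k = \<xi> k j - (1 / real N) *\<^sub>R (\<Sum>i=1..N. \<xi> k i)" for k
  have "\<zeta> m j + \<theta> (Suc m) - \<theta>l (Suc m) j = (1 / \<nu>) *\<^sub>R X (Suc m)"
    using local_residual_eq[of "Suc m" j] by (simp add: X_def)
  moreover have "\<zeta> (m - 1) j + \<theta> m - \<theta>l m j = (1 / \<nu>) *\<^sub>R X m"
    using local_residual_eq[of m j] by (simp add: X_def)
  ultimately have "\<nu> *\<^sub>R \<zeta> n j = \<nu> *\<^sub>R ((1 + \<beta>) *\<^sub>R ((1 / \<nu>) *\<^sub>R X (Suc m)) - \<beta> *\<^sub>R ((1 / \<nu>) *\<^sub>R X m))"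
    unfolding Suc upd[OF assms] \<beta>_def by simp
  also have "\<dots> = (1 + \<beta>) *\<^sub>R X (Suc m) - \<beta> *\<^sub>R X m"
    using nu by (simp add: scaleR_diff_right)
  also have "\<dots> = \<eta> n j - (1 / real N) *\<^sub>R (\<Sum>k=1..N. \<eta> n k)"
    by (simp add: Suc X_def \<eta>_def \<beta>_def sum.distrib sum_subtractf scaleR_sum_right[symmetric] algebra_simps)
  finally show ?thesis .
qed (simp add: init_z)

lemma local_iterate_eq:
  assumes "j \<in> {1..N}"
  shows "\<theta>l (Suc n) j = (1 / \<nu>) *\<^sub>R (\<eta> n j - \<xi> (Suc n) j - (1 / real N) *\<^sub>R (\<Sum>k=1..N. \<eta> n k))"
proof -
  have "\<theta>l (Suc n) j = \<zeta> n j - (1 / \<nu>) *\<^sub>R \<xi> (Suc n) j"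
    using nu by (simp add: \<xi>_def)
  also have "\<zeta> n j = (1 / \<nu>) *\<^sub>R (\<eta> n j - (1 / real N) *\<^sub>R (\<Sum>k=1..N. \<eta> n k))"
    using zeta_eq_centered_eta[OF assms, of n, symmetric] nu by simp
  finally show ?thesis
    by (simp add: algebra_simps)
qed

lemma conj_approx:
  assumes "j \<in> {1..N}"
  shows "inner (\<xi> (Suc n) j) y - g j y \<le> inner (\<xi> (Suc n) j) (\<theta>l (Suc n) j) - g j (\<theta>l (Suc n) j) + \<epsilon> n"
  using pd_gap_le_imp_conj_approx[OF inexact[OF assms]] by (simp add: \<xi>_def g_def)

end

section \<open>Convergence\<close>

lemma sum_le_inverse_squares:
  assumes "\<And>k. a k \<le> c / (real k + 1)\<^sup>2" and "0 \<le> c"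
  shows "(\<Sum>k<m. a k) \<le> c * pi\<^sup>2 / 6"
proof -
  have "(\<Sum>k<m. a k) \<le> c * (\<Sum>k<m. 1 / (real k + 1)\<^sup>2)"
    using assms(1) by (simp add: sum_distrib_left sum_mono)
  also have "\<dots> \<le> c * (pi\<^sup>2 / 6)"
    using \<open>0 \<le> c\<close> sum_le_suminf[OF sums_summable[OF inverse_squares_sums], of "{..<m}"]
      sums_unique[OF inverse_squares_sums]
    by (intro mult_left_mono) (simp_all add: add.commute)
  finally show ?thesis by simp
qed

locale dualfl_convergence = dualfl_iteration +
  fixes \<theta>s :: 'a and \<xi>s :: "nat \<Rightarrow> 'a"
  assumes dual_solution: "\<And>j. j \<in> {1..N} \<Longrightarrow> is_subgradient (\<lambda>x. f j x - \<nu> / 2 * (norm x)\<^sup>2) \<theta>s (\<xi>s j)"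
    and sum_dual_solution: "(\<Sum>j=1..N. \<xi>s j) = - (real N * \<nu>) *\<^sub>R \<theta>s"
begin

text \<open>The dual energy at \<xi>^(n), with each conjugate g_j^* replaced by its lower estimate at the
  local iterate.\<close>

definition dual_obj :: "nat \<Rightarrow> real" where
  "dual_obj n = (\<Sum>j=1..N. inner (\<xi> n j) (\<theta>l n j) - g j (\<theta>l n j)) + (norm (\<Sum>j=1..N. \<xi> n j))\<^sup>2 / (2 * N * \<nu>)"

definition dual_opt :: real where
  "dual_opt = (\<Sum>j=1..N. inner (\<xi>s j) \<theta>s - g j \<theta>s) + (norm (\<Sum>j=1..N. \<xi>s j))\<^sup>2 / (2 * N * \<nu>)"

definition lyapunov :: "nat \<Rightarrow> real" where
  "lyapunov n = (dualfl_t 0 n)\<^sup>2 * (dual_obj (Suc n) - dual_opt)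
     + 1 / (2 * \<nu>) * (\<Sum>j=1..N. (norm (dualfl_t 0 n *\<^sub>R \<xi> (Suc n) j - (dualfl_t 0 n - 1) *\<^sub>R \<xi> n j - \<xi>s j))\<^sup>2)"

lemma conj_le_dual_solution:
  assumes "j \<in> {1..N}"
  shows "inner (\<xi>s j) y - g j y \<le> inner (\<xi>s j) \<theta>s - g j \<theta>s"
proof -
  have "g j \<theta>s + inner (\<xi>s j) (y - \<theta>s) \<le> g j y"
    using dual_solution[OF assms] by (simp add: is_subgradient_def g_def)
  then show ?thesis
    by (simp add: inner_diff_right)
qed

lemma dual_obj_le_opt:
  "dual_obj (Suc n) \<le> dual_opt + 1 / \<nu> * (\<Sum>j=1..N. inner (\<xi> (Suc n) j - \<xi>s j) (\<eta> n j - \<xi> (Suc n) j))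
     + 1 / (2 * \<nu>) * (\<Sum>j=1..N. (norm (\<xi> (Suc n) j - \<eta> n j))\<^sup>2)"
  using prox_step_inequality[where \<xi> = "\<xi> (Suc n)" and \<omega> = \<xi>s and \<eta> = "\<eta> n" and \<theta> = "\<theta>l (Suc n)"
      and c = "\<lambda>j. inner (\<xi>s j) \<theta>s - g j \<theta>s", OF nu N local_iterate_eq conj_le_dual_solution]
  by (simp add: dual_obj_def dual_opt_def algebra_simps)

lemma dual_obj_descent:
  "dual_obj (Suc (Suc n)) \<le> dual_obj (Suc n) + N * \<epsilon> n
     + 1 / \<nu> * (\<Sum>j=1..N. inner (\<xi> (Suc (Suc n)) j - \<xi> (Suc n) j) (\<eta> (Suc n) j - \<xi> (Suc (Suc n)) j))
     + 1 / (2 * \<nu>) * (\<Sum>j=1..N. (norm (\<xi> (Suc (Suc n)) j - \<eta> (Suc n) j))\<^sup>2)"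
  using prox_step_inequality[where \<xi> = "\<xi> (Suc (Suc n))" and \<omega> = "\<xi> (Suc n)" and \<eta> = "\<eta> (Suc n)"
      and \<theta> = "\<theta>l (Suc (Suc n))" and c = "\<lambda>j. inner (\<xi> (Suc n) j) (\<theta>l (Suc n) j) - g j (\<theta>l (Suc n) j) + \<epsilon> n",
      OF nu N local_iterate_eq conj_approx]
  by (simp add: dual_obj_def sum.distrib sum_subtractf algebra_simps)

lemma lyapunov_0: "lyapunov 0 \<le> 1 / (2 * \<nu>) * (\<Sum>j=1..N. (norm (\<xi>s j))\<^sup>2)"
proof -
  have "lyapunov 0 = dual_obj 1 - dual_opt + 1 / (2 * \<nu>) * (\<Sum>j=1..N. (norm (\<xi> 1 j - \<xi>s j))\<^sup>2)"
    by (simp add: lyapunov_def)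
  also have "\<dots> \<le> 1 / \<nu> * (\<Sum>j=1..N. inner (\<xi> 1 j - \<xi>s j) (- \<xi> 1 j))
      + 1 / (2 * \<nu>) * (\<Sum>j=1..N. (norm (\<xi> 1 j))\<^sup>2)
      + 1 / (2 * \<nu>) * (\<Sum>j=1..N. (norm (\<xi> 1 j - \<xi>s j))\<^sup>2)"
    using dual_obj_le_opt[of 0] by simp
  also have "\<dots> = 1 / (2 * \<nu>) * (\<Sum>j=1..N. 2 * inner (\<xi> 1 j - \<xi>s j) (- \<xi> 1 j)
      + (norm (\<xi> 1 j))\<^sup>2 + (norm (\<xi> 1 j - \<xi>s j))\<^sup>2)"
    using nu by (simp only: sum.distrib flip: sum_distrib_left) (simp add: field_simps)
  also have "\<dots> = 1 / (2 * \<nu>) * (\<Sum>j=1..N. (norm (\<xi>s j))\<^sup>2)"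
    unfolding power2_norm_eq_inner by (simp add: inner_diff_left inner_diff_right inner_commute)
  finally show ?thesis .
qed

lemma lyapunov_Suc: "lyapunov (Suc n) \<le> lyapunov n + N * (dualfl_t 0 n)\<^sup>2 * \<epsilon> n"
proof -
  have "lyapunov (Suc n) \<le> (dualfl_t 0 n)\<^sup>2 * (dual_obj (Suc n) + N * \<epsilon> n - dual_opt)
      + 1 / (2 * \<nu>) * (\<Sum>j=1..N. (norm (dualfl_t 0 n *\<^sub>R \<xi> (Suc n) j - (dualfl_t 0 n - 1) *\<^sub>R \<xi> n j - \<xi>s j))\<^sup>2)"
    unfolding lyapunov_def
    by (rule fista_lyapunov_step[OF nu dualfl_t_zero_ge_one dualfl_t_zero_Suc_square _ dual_obj_descent dual_obj_le_opt])
      (simp add: \<eta>_def dualfl_beta_zero)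
  then show ?thesis
    by (simp add: lyapunov_def algebra_simps)
qed

lemma lyapunov_le: "lyapunov n \<le> 1 / (2 * \<nu>) * (\<Sum>j=1..N. (norm (\<xi>s j))\<^sup>2) + N * (\<Sum>k<n. (dualfl_t 0 k)\<^sup>2 * \<epsilon> k)"
proof (induction n)
  case 0
  then show ?case using lyapunov_0 by simp
next
  case (Suc n)
  then show ?case
    using lyapunov_Suc[of n] by (simp add: algebra_simps)
qed

lemma dist_sq_le_dual_gap:
  "real N * \<nu> / 2 * (norm (\<theta> (Suc n) - \<theta>s))\<^sup>2 \<le> dual_obj (Suc n) - dual_opt + N * \<epsilon> n"
proof -
  define c where "c = real N * \<nu>"
  define A where "A = (\<Sum>j=1..N. \<xi> (Suc n) j)"
  define B where "B = (\<Sum>j=1..N. \<xi>s j)"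
  have "c > 0"
    using N nu by (simp add: c_def)
  have \<theta>A: "\<theta> (Suc n) = - (1 / c) *\<^sub>R A" and \<theta>B: "\<theta>s = - (1 / c) *\<^sub>R B"
    using theta_eq_sum_xi[of "Suc n"] sum_dual_solution N nu by (simp_all add: A_def B_def c_def)
  have "(\<Sum>j=1..N. inner (\<xi> (Suc n) j) \<theta>s - g j \<theta>s)
      \<le> (\<Sum>j=1..N. inner (\<xi> (Suc n) j) (\<theta>l (Suc n) j) - g j (\<theta>l (Suc n) j) + \<epsilon> n)"
    by (intro sum_mono conj_approx)
  then have gap: "inner (A - B) \<theta>s + ((norm A)\<^sup>2 - (norm B)\<^sup>2) / (2 * c) \<le> dual_obj (Suc n) - dual_opt + N * \<epsilon> n"
    by (simp add: dual_obj_def dual_opt_def A_def B_def c_def sum.distrib sum_subtractf inner_sum_left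
        inner_diff_left diff_divide_distrib algebra_simps)
  have "A - B = - c *\<^sub>R (\<theta> (Suc n) - \<theta>s)"
    using \<open>c > 0\<close> by (simp add: \<theta>A \<theta>B scaleR_diff_right)
  then have "c / 2 * (norm (\<theta> (Suc n) - \<theta>s))\<^sup>2 = (norm (A - B))\<^sup>2 / (2 * c)"
    using \<open>c > 0\<close> by (simp add: power2_eq_square)
  also have "\<dots> = inner (A - B) \<theta>s + ((norm A)\<^sup>2 - (norm B)\<^sup>2) / (2 * c)"
    unfolding \<theta>B power2_norm_eq_inner using \<open>c > 0\<close>
    by (simp add: inner_diff_left inner_diff_right inner_commute field_simps)
  finally show ?thesis
    using gap unfolding c_def by linarith
qed

lemma dist_sq_le_lyapunov_bound:
  "real N * \<nu> / 2 * (norm (\<theta> (Suc n) - \<theta>s))\<^sup>2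
     \<le> (1 / (2 * \<nu>) * (\<Sum>j=1..N. (norm (\<xi>s j))\<^sup>2) + N * (\<Sum>k<n. (dualfl_t 0 k)\<^sup>2 * \<epsilon> k)) / (dualfl_t 0 n)\<^sup>2
       + N * \<epsilon> n"
proof -
  have "(dualfl_t 0 n)\<^sup>2 * (dual_obj (Suc n) - dual_opt) \<le> lyapunov n"
    using nu by (simp add: lyapunov_def sum_nonneg)
  also have "\<dots> \<le> 1 / (2 * \<nu>) * (\<Sum>j=1..N. (norm (\<xi>s j))\<^sup>2) + N * (\<Sum>k<n. (dualfl_t 0 k)\<^sup>2 * \<epsilon> k)"
    by (rule lyapunov_le)
  finally have "dual_obj (Suc n) - dual_opt
      \<le> (1 / (2 * \<nu>) * (\<Sum>j=1..N. (norm (\<xi>s j))\<^sup>2) + N * (\<Sum>k<n. (dualfl_t 0 k)\<^sup>2 * \<epsilon> k)) / (dualfl_t 0 n)\<^sup>2"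
    using dualfl_t_zero_ge_one[of n] by (simp add: pos_le_divide_eq mult.commute)
  with dist_sq_le_dual_gap[of n] show ?thesis
    by linarith
qed

lemma scaled_dist_sq_le_inverse_sq:
  assumes nonneg: "\<And>k. 0 \<le> \<epsilon> k"
    and tolerance: "\<And>k. N * (dualfl_t 0 k)\<^sup>2 * \<epsilon> k \<le> c / (real k + 1)\<^sup>2" and "0 \<le> c"
  shows "real N * \<nu> / 2 * (norm (\<theta> (Suc m) - \<theta>s))\<^sup>2
           \<le> (4 * (1 / (2 * \<nu>) * (\<Sum>j=1..N. (norm (\<xi>s j))\<^sup>2) + c * pi\<^sup>2 / 6) + c) / (real m + 1)\<^sup>2"
proof -
  define K where "K = 1 / (2 * \<nu>) * (\<Sum>j=1..N. (norm (\<xi>s j))\<^sup>2) + c * pi\<^sup>2 / 6"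
  have "0 \<le> K"
    using nu \<open>0 \<le> c\<close> by (simp add: K_def sum_nonneg)
  have "N * (\<Sum>k<m. (dualfl_t 0 k)\<^sup>2 * \<epsilon> k) \<le> c * pi\<^sup>2 / 6"
    using tolerance \<open>0 \<le> c\<close> unfolding sum_distrib_left
    by (intro sum_le_inverse_squares) (simp add: mult.assoc)
  then have "(1 / (2 * \<nu>) * (\<Sum>j=1..N. (norm (\<xi>s j))\<^sup>2) + N * (\<Sum>k<m. (dualfl_t 0 k)\<^sup>2 * \<epsilon> k))
      / (dualfl_t 0 m)\<^sup>2 \<le> K / (dualfl_t 0 m)\<^sup>2"
    by (simp add: K_def divide_right_mono)
  also have "\<dots> \<le> 4 * K / (real m + 1)\<^sup>2"
    using \<open>0 \<le> K\<close> by (rule div_dualfl_t_zero_square_le)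
  finally have "real N * \<nu> / 2 * (norm (\<theta> (Suc m) - \<theta>s))\<^sup>2 \<le> 4 * K / (real m + 1)\<^sup>2 + N * \<epsilon> m"
    using dist_sq_le_lyapunov_bound[of m] by linarith
  also have "N * \<epsilon> m \<le> c / (real m + 1)\<^sup>2"
  proof -
    have "N * \<epsilon> m * 1 \<le> N * \<epsilon> m * (dualfl_t 0 m)\<^sup>2"
      using nonneg[of m] dualfl_t_zero_ge_one[of m] by (intro mult_left_mono) auto
    with tolerance[of m] show ?thesis
      by (simp add: mult_ac)
  qed
  finally show ?thesis
    by (simp add: K_def add_divide_distrib)
qed

lemma dist_sq_le_inverse_sq:
  assumes nonneg: "\<And>k. 0 \<le> \<epsilon> k"
    and tolerance: "\<And>k. N * (dualfl_t 0 k)\<^sup>2 * \<epsilon> k \<le> c / (real k + 1)\<^sup>2"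
  shows "\<exists>C>0. \<forall>n\<ge>1. (norm (\<theta> n - \<theta>s))\<^sup>2 \<le> C / (real n)\<^sup>2"
proof -
  have "0 \<le> N * (dualfl_t 0 0)\<^sup>2 * \<epsilon> 0"
    using nonneg by simp
  with tolerance[of 0] have "0 \<le> c"
    by simp
  define B where "B = 4 * (1 / (2 * \<nu>) * (\<Sum>j=1..N. (norm (\<xi>s j))\<^sup>2) + c * pi\<^sup>2 / 6) + c"
  define C where "C = 2 * B / (N * \<nu>) + 1"
  have "(norm (\<theta> n - \<theta>s))\<^sup>2 \<le> C / (real n)\<^sup>2" if "n \<ge> 1" for n
  proof -
    obtain m where m: "n = Suc m"
      using \<open>n \<ge> 1\<close> by (cases n) auto
    have "(norm (\<theta> (Suc m) - \<theta>s))\<^sup>2 \<le> 2 * B / (N * \<nu>) / (real m + 1)\<^sup>2"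
      using scaled_dist_sq_le_inverse_sq[OF nonneg tolerance \<open>0 \<le> c\<close>, of m] N nu
      by (simp add: B_def field_simps)
    also have "\<dots> \<le> C / (real m + 1)\<^sup>2"
      by (intro divide_right_mono) (simp_all add: C_def)
    finally show ?thesis
      by (simp add: m add.commute)
  qed
  moreover have "C > 0"
    using \<open>0 \<le> c\<close> N nu by (simp add: B_def C_def sum_nonneg add_nonneg_pos)
  ultimately show ?thesis
    by blast
qed

end

lemma dualfl_t_zero_square_div_powr_le:
  assumes "\<gamma> \<ge> 0"
  shows "(dualfl_t 0 k)\<^sup>2 / (real k + 1) powr (4 + \<gamma>) \<le> 1 / (real k + 1)\<^sup>2"
proof -
  have "(real k + 1) ^ 4 = (real k + 1) powr 4"
    by (simp add: powr_realpow)
  also have "\<dots> \<le> (real k + 1) powr (4 + \<gamma>)"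
    using assms by (intro powr_mono) auto
  finally have "(real k + 1) ^ 4 \<le> (real k + 1) powr (4 + \<gamma>)" .
  moreover have "(dualfl_t 0 k)\<^sup>2 \<le> (real k + 1)\<^sup>2"
    using dualfl_t_zero_le[of k] dualfl_t_zero_ge_one[of k] by (intro power_mono) auto
  ultimately have "(dualfl_t 0 k)\<^sup>2 / (real k + 1) powr (4 + \<gamma>) \<le> (real k + 1)\<^sup>2 / (real k + 1) ^ 4"
    by (intro frac_le) auto
  also have "\<dots> = 1 / (real k + 1)\<^sup>2"
    by (simp add: power2_eq_square power4_eq_xxxx)
  finally show ?thesis .
qed

lemma LIMSEQ_of_norm_square_le_inverse_square:
  fixes x :: "nat \<Rightarrow> 'a::real_normed_vector"
  assumes "\<forall>n\<ge>1. (norm (x n - a))\<^sup>2 \<le> C / (real n)\<^sup>2"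
  shows "x \<longlonglongrightarrow> a"
proof -
  have "norm (x n - a) \<le> sqrt C / real n" if "n \<ge> 1" for n
    using real_sqrt_le_mono[OF assms[rule_format, OF that]] by (simp add: real_sqrt_divide)
  then have "\<forall>\<^sub>F n in sequentially. norm (x n - a) \<le> sqrt C / real n"
    using eventually_sequentially by blast
  then have "(\<lambda>n. x n - a) \<longlonglongrightarrow> 0"
    by (rule Lim_null_comparison) (rule lim_const_over_n)
  then show ?thesis
    by (simp add: LIM_zero_iff)
qed

theorem theorem3p2:
  fixes f :: "nat \<Rightarrow> 'a::euclidean_space \<Rightarrow> real"
    and N :: nat and \<mu> \<nu> \<gamma> :: real and \<theta>s :: 'a
    and \<theta> :: "nat \<Rightarrow> 'a"                 \<comment> \<open>\<theta> n = global iterate \<theta>^(n)\<close>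
    and \<theta>l :: "nat \<Rightarrow> nat \<Rightarrow> 'a"         \<comment> \<open>\<theta>l n j = local iterate \<theta>_j^(n)\<close>
    and \<zeta> :: "nat \<Rightarrow> nat \<Rightarrow> 'a"          \<comment> \<open>\<zeta> n j = \<zeta>_j^(n)\<close>
  assumes N: "N \<ge> 1"
    and cont: "\<And>j. j \<in> {1..N} \<Longrightarrow> continuous_on UNIV (f j)"
    and conv: "\<And>j. j \<in> {1..N} \<Longrightarrow> convex_on UNIV (f j)"
    and coercive: "filterlim (\<lambda>x. (1 / real N) * (\<Sum>j=1..N. f j x)) at_top at_infinity"
    and mu: "\<mu> > 0"
    and strong: "\<And>j. j \<in> {1..N} \<Longrightarrow> strongly_convex \<mu> (f j)"
    and min: "\<And>x. (1 / real N) * (\<Sum>j=1..N. f j \<theta>s) \<le> (1 / real N) * (\<Sum>j=1..N. f j x)"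
    and nu: "0 < \<nu>" "\<nu> \<le> \<mu>"
    and gamma: "\<gamma> > 0"
    and init_l: "\<And>j. \<theta>l 0 j = 0"
    and init_z: "\<And>j. \<zeta> 0 j = 0"
    and avg: "\<And>n. \<theta> n = (1 / real N) *\<^sub>R (\<Sum>j=1..N. \<theta>l n j)"
    and upd: "\<And>n j. j \<in> {1..N} \<Longrightarrow>
       \<zeta> (Suc n) j = (1 + dualfl_beta 0 n) *\<^sub>R (\<zeta> n j + \<theta> (Suc n) - \<theta>l (Suc n) j)
                     - dualfl_beta 0 n *\<^sub>R (\<zeta> (n - 1) j + \<theta> n - \<theta>l n j)"
    and inexact: "\<And>n j. j \<in> {1..N} \<Longrightarrow>
       pd_gap (f j) \<nu> (\<zeta> n j) (\<theta>l (Suc n) j)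
         \<le> ereal (1 / (real N * \<nu> * (real n + 1) powr (4 + \<gamma>)))"
  shows "\<theta> \<longlonglongrightarrow> \<theta>s \<and>
         (\<exists>C>0. \<forall>n\<ge>1. (norm (\<theta> n - \<theta>s))\<^sup>2 \<le> C / (real n)\<^sup>2)"
proof -
  have "(\<Sum>j=1..N. f j \<theta>s) \<le> (\<Sum>j=1..N. f j y)" for y
    using min[of y] N by (simp add: divide_le_cancel)
  moreover have "strongly_convex \<nu> (f j)" if "j \<in> {1..N}" for j
    using strongly_convex_mono[OF strong[OF that] nu(2)] .
  ultimately obtain \<xi>s where dual_solution:
    "\<forall>j\<in>{1..N}. is_subgradient (\<lambda>y. f j y - \<nu> / 2 * (norm y)\<^sup>2) \<theta>s (\<xi>s j)"
    and sum_dual_solution: "(\<Sum>j=1..N. \<xi>s j) = - (real N * \<nu>) *\<^sub>R \<theta>s"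
    using exists_dual_solution[of "{1..N}" f \<nu> \<theta>s] conv by auto
  define \<epsilon> where "\<epsilon> n = 1 / (real N * \<nu> * (real n + 1) powr (4 + \<gamma>))" for n
  interpret dualfl_convergence f N \<nu> \<theta> \<theta>l \<zeta> \<epsilon> \<theta>s \<xi>s
    by unfold_locales
      (use N nu init_l init_z avg upd inexact dual_solution sum_dual_solution in \<open>simp_all add: \<epsilon>_def\<close>)
  have "real N * (dualfl_t 0 k)\<^sup>2 * \<epsilon> k \<le> (1 / \<nu>) / (real k + 1)\<^sup>2" for k
    using dualfl_t_zero_square_div_powr_le[of \<gamma> k] gamma N nu
    by (simp add: \<epsilon>_def field_simps)
  then obtain C where "C > 0" and "\<forall>n\<ge>1. (norm (\<theta> n - \<theta>s))\<^sup>2 \<le> C / (real n)\<^sup>2"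
    using dist_sq_le_inverse_sq[of "1 / \<nu>"] nu by (auto simp: \<epsilon>_def)
  then show ?thesis
    using LIMSEQ_of_norm_square_le_inverse_square by blast
qed

end
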